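(* Consider a finite set of time periods $\mathcal{T}$ and a finite set of user types $\mathcal{K}=\{1,\dots,K\}$, where type $k$ has aggregate demand $D_k^t\ge 0$ and value of lost load $V_k^t$ in period $t$, with $V_1^t\le\cdots\le V_K^t$. Let $D_a^t=\sum_kD_k^t>0$. For capacity $r\ge0$ and random variables $\Theta^t$ supported in $[0,1]$, let $s^t=\min(D_a^t,r\Theta^t)$, $d_k^t=\frac{D_k^t}{D_a^t}s^t$, $C_s^t(r,\Theta^t)=\sum_k(V_k^t-p)(D_k^t-d_k^t)$. Fix $p$ with $p\le V_1^t$ for all $t$, $c_r>0$, $\xi\ge0$. Let $f^{\mathrm{No}}(r)=\sum_tp\,\mathbb{E}[s^t]-c_rr$ and $f^{\mathrm{Ins}}(r,\pi)=\sum_k\sum_t\pi_k^tD_k^t+\sum_tp\,\mathbb{E}[s^t]-c_rr-\sum_t\mathbb{E}[C_s^t(r,\Theta^t)]$, and define the social cost $C^{\mathrm{SO}}(r)=c_rr+\sum_t\mathbb{E}[C_s^t(r,\Theta^t)]$. Let $(r^*,\pi^* )$ be the optimal solution of Problem-Ins: minimize $\sum_k\sum_t\pi_k^tD_k^t$ over $r\ge0,\pi$ subject to $f^{\mathrm{Ins}}(r,\pi)\ge\xi$, $\pi_k^t-\pi_m^t=(V_k^t-V_m^t)\mathbb{E}[1-s^t/D_a^t]$ for all $t,m,k$, and $0\le\pi_k^t\le(V_k^t-p)\mathbb{E}[1-s^t/D_a^t]$ for all $t,k$. Let $r^\ddagger$ be the optimal solution of Problem-NoIns: maximize $r\ge0$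 subject to $f^{\mathrm{No}}(r)\ge\xi$. Then $C^{\mathrm{SO}}(r^* )\le C^{\mathrm{SO}}(r^\ddagger)$, i.e., the optimal social cost under the insurance-providing utility is no larger than under the no-insurance utility.
   Context: Expectations are over $\Theta^t$. The problems are assumed feasible with optimal solutions as described. *)

theory Defs
  imports "HOL-Probability.Probability"
begin

text \<open>User types are indexed by {1..K}; D k t is aggregate demand, V k t value of lost load.
  Theta t is the random variable of period t on the probability space M.\<close>

definition Dagg :: "nat \<Rightarrow> (nat \<Rightarrow> 't \<Rightarrow> real) \<Rightarrow> 't \<Rightarrow> real" where
  "Dagg K D t = (\<Sum>k=1..K. D k t)"

definition supp :: "nat \<Rightarrow> (nat \<Rightarrow> 't \<Rightarrow> real) \<Rightarrow> real \<Rightarrow> 't \<Rightarrow> real \<Rightarrow> real" where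
  "supp K D r t th = min (Dagg K D t) (r * th)"

definition Cs :: "nat \<Rightarrow> (nat \<Rightarrow> 't \<Rightarrow> real) \<Rightarrow> (nat \<Rightarrow> 't \<Rightarrow> real) \<Rightarrow> real \<Rightarrow> real \<Rightarrow> 't \<Rightarrow> real \<Rightarrow> real" where
  "Cs K D V p r t th =
     (\<Sum>k=1..K. (V k t - p) * (D k t - D k t / Dagg K D t * supp K D r t th))"

definition fNo :: "'a measure \<Rightarrow> 't set \<Rightarrow> ('t \<Rightarrow> 'a \<Rightarrow> real) \<Rightarrow> nat \<Rightarrow> (nat \<Rightarrow> 't \<Rightarrow> real)
    \<Rightarrow> real \<Rightarrow> real \<Rightarrow> real \<Rightarrow> real" where
  "fNo M T Theta K D p cr r =
     (\<Sum>t\<in>T. p * (\<integral>\<omega>. supp K D r t (Theta t \<omega>) \<partial>M)) - cr * r"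

definition insObj :: "'t set \<Rightarrow> nat \<Rightarrow> (nat \<Rightarrow> 't \<Rightarrow> real) \<Rightarrow> (nat \<Rightarrow> 't \<Rightarrow> real) \<Rightarrow> real" where
  "insObj T K D \<pi> = (\<Sum>k=1..K. \<Sum>t\<in>T. \<pi> k t * D k t)"

definition fIns :: "'a measure \<Rightarrow> 't set \<Rightarrow> ('t \<Rightarrow> 'a \<Rightarrow> real) \<Rightarrow> nat \<Rightarrow> (nat \<Rightarrow> 't \<Rightarrow> real)
    \<Rightarrow> (nat \<Rightarrow> 't \<Rightarrow> real) \<Rightarrow> real \<Rightarrow> real \<Rightarrow> real \<Rightarrow> (nat \<Rightarrow> 't \<Rightarrow> real) \<Rightarrow> real" where
  "fIns M T Theta K D V p cr r \<pi> =
     insObj T K D \<pi> + (\<Sum>t\<in>T. p * (\<integral>\<omega>. supp K D r t (Theta t \<omega>) \<partial>M)) - cr * r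
     - (\<Sum>t\<in>T. (\<integral>\<omega>. Cs K D V p r t (Theta t \<omega>) \<partial>M))"

definition CSO :: "'a measure \<Rightarrow> 't set \<Rightarrow> ('t \<Rightarrow> 'a \<Rightarrow> real) \<Rightarrow> nat \<Rightarrow> (nat \<Rightarrow> 't \<Rightarrow> real)
    \<Rightarrow> (nat \<Rightarrow> 't \<Rightarrow> real) \<Rightarrow> real \<Rightarrow> real \<Rightarrow> real \<Rightarrow> real" where
  "CSO M T Theta K D V p cr r = cr * r + (\<Sum>t\<in>T. (\<integral>\<omega>. Cs K D V p r t (Theta t \<omega>) \<partial>M))"

definition unserved :: "'a measure \<Rightarrow> ('t \<Rightarrow> 'a \<Rightarrow> real) \<Rightarrow> nat \<Rightarrow> (nat \<Rightarrow> 't \<Rightarrow> real)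
    \<Rightarrow> real \<Rightarrow> 't \<Rightarrow> real" where
  "unserved M Theta K D r t = (\<integral>\<omega>. 1 - supp K D r t (Theta t \<omega>) / Dagg K D t \<partial>M)"

definition feasible_Ins where
  "feasible_Ins M T Theta K D V p cr \<xi> r \<pi> \<longleftrightarrow>
     r \<ge> 0 \<and> fIns M T Theta K D V p cr r \<pi> \<ge> \<xi> \<and>
     (\<forall>t\<in>T. \<forall>k\<in>{1..K}. \<forall>m\<in>{1..K}.
        \<pi> k t - \<pi> m t = (V k t - V m t) * unserved M Theta K D r t) \<and>
     (\<forall>t\<in>T. \<forall>k\<in>{1..K}.
        0 \<le> \<pi> k t \<and> \<pi> k t \<le> (V k t - p) * unserved M Theta K D r t)"

definition optimal_Ins where
  "optimal_Ins M T Theta K D V p cr \<xi> r \<pi> \<longleftrightarrow>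
     feasible_Ins M T Theta K D V p cr \<xi> r \<pi> \<and>
     (\<forall>r' \<pi>'. feasible_Ins M T Theta K D V p cr \<xi> r' \<pi>' \<longrightarrow> insObj T K D \<pi> \<le> insObj T K D \<pi>')"

definition feasible_NoIns where
  "feasible_NoIns M T Theta K D p cr \<xi> r \<longleftrightarrow> r \<ge> 0 \<and> fNo M T Theta K D p cr r \<ge> \<xi>"

definition optimal_NoIns where
  "optimal_NoIns M T Theta K D p cr \<xi> r \<longleftrightarrow>
     feasible_NoIns M T Theta K D p cr \<xi> r \<and>
     (\<forall>r'. feasible_NoIns M T Theta K D p cr \<xi> r' \<longrightarrow> r' \<le> r)"

end

theory Submission
  imports Defs
begin

text \<open>Charging every type its expected shortage cost per unit of demand (the fair premium) turns
  the insurance profit into the no-insurance profit, so the insurance constraints are no harder to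
  meet: a feasible insurance capacity is feasible without insurance, and the no-insurance optimum
  \<open>r\<^sup>\<ddagger>\<close> with fair premiums is feasible with insurance. Hence the optimal premium income is at most
  the expected shortage cost at \<open>r\<^sup>\<ddagger>\<close>. Moreover the supply revenue at \<open>r\<^sup>*\<close> exceeds \<open>\<xi>\<close> by at
  most \<open>c\<^sub>r r\<^sup>\<ddagger>\<close>, for otherwise the larger capacity \<open>(revenue - \<xi>) / c\<^sub>r\<close> would be feasible without
  insurance, the revenue being monotone in the capacity. Adding both bounds to the profit
  constraint at \<open>r\<^sup>*\<close> gives \<open>C\<^sup>S\<^sup>O(r\<^sup>*) \<le> C\<^sup>S\<^sup>O(r\<^sup>\<ddagger>)\<close>.\<close>

definition fair_premium :: "'a measure \<Rightarrow> ('t \<Rightarrow> 'a \<Rightarrow> real) \<Rightarrow> nat \<Rightarrow> (nat \<Rightarrow> 't \<Rightarrow> real)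
    \<Rightarrow> (nat \<Rightarrow> 't \<Rightarrow> real) \<Rightarrow> real \<Rightarrow> real \<Rightarrow> nat \<Rightarrow> 't \<Rightarrow> real" where
  "fair_premium M Theta K D V p r k t = (V k t - p) * unserved M Theta K D r t"

definition expected_revenue :: "'a measure \<Rightarrow> 't set \<Rightarrow> ('t \<Rightarrow> 'a \<Rightarrow> real) \<Rightarrow> nat
    \<Rightarrow> (nat \<Rightarrow> 't \<Rightarrow> real) \<Rightarrow> real \<Rightarrow> real \<Rightarrow> real" where
  "expected_revenue M T Theta K D p r = (\<Sum>t\<in>T. p * (\<integral>\<omega>. supp K D r t (Theta t \<omega>) \<partial>M))"

lemma Cs_eq:
  "Cs K D V p r t th = (\<Sum>k=1..K. (V k t - p) * D k t) * (1 - supp K D r t th / Dagg K D t)"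
  unfolding Cs_def sum_distrib_right by (rule sum.cong) (simp_all add: right_diff_distrib)

lemma sum_integral_Cs_eq_insObj:
  "(\<Sum>t\<in>T. \<integral>\<omega>. Cs K D V p r t (Theta t \<omega>) \<partial>M) = insObj T K D (fair_premium M Theta K D V p r)"
  unfolding insObj_def fair_premium_def Cs_eq unserved_def integral_mult_right_zero
  by (subst sum.swap) (simp add: sum_distrib_right mult_ac)

lemma fNo_eq: "fNo M T Theta K D p cr r = expected_revenue M T Theta K D p r - cr * r"
  unfolding fNo_def expected_revenue_def ..

lemma fIns_eq:
  "fIns M T Theta K D V p cr r \<pi> = insObj T K D \<pi> + expected_revenue M T Theta K D p r - cr * r
     - insObj T K D (fair_premium M Theta K D V p r)"
  unfolding fIns_def expected_revenue_def sum_integral_Cs_eq_insObj ..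

lemma CSO_eq: "CSO M T Theta K D V p cr r = cr * r + insObj T K D (fair_premium M Theta K D V p r)"
  unfolding CSO_def sum_integral_Cs_eq_insObj ..

lemma insObj_mono:
  assumes "\<And>k t. t \<in> T \<Longrightarrow> k \<in> {1..K} \<Longrightarrow> 0 \<le> D k t"
    and "\<And>k t. t \<in> T \<Longrightarrow> k \<in> {1..K} \<Longrightarrow> \<pi> k t \<le> \<pi>' k t"
  shows "insObj T K D \<pi> \<le> insObj T K D \<pi>'"
  unfolding insObj_def by (intro sum_mono mult_right_mono) (simp_all add: assms)

lemma unserved_nonneg:
  assumes "0 \<le> Dagg K D t"
  shows "0 \<le> unserved M Theta K D r t"
  unfolding unserved_def
proof (rule integral_nonneg_AE, rule AE_I2)
  fix \<omega>
  have "supp K D r t (Theta t \<omega>) / Dagg K D t \<le> 1"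
    using assms by (cases "Dagg K D t = 0") (simp_all add: supp_def)
  then show "0 \<le> 1 - supp K D r t (Theta t \<omega>) / Dagg K D t"
    by simp
qed

lemma feasible_Ins_imp_feasible_NoIns:
  assumes "\<And>k t. t \<in> T \<Longrightarrow> k \<in> {1..K} \<Longrightarrow> 0 \<le> D k t"
    and "feasible_Ins M T Theta K D V p cr \<xi> r \<pi>"
  shows "feasible_NoIns M T Theta K D p cr \<xi> r"
proof -
  have "insObj T K D \<pi> \<le> insObj T K D (fair_premium M Theta K D V p r)"
    using assms by (intro insObj_mono) (auto simp: feasible_Ins_def fair_premium_def)
  with assms(2) show ?thesis
    unfolding feasible_Ins_def feasible_NoIns_def fIns_eq fNo_eq by linarith
qed

lemma feasible_Ins_fair_premium:
  assumes "\<And>t. t \<in> T \<Longrightarrow> 0 \<le> Dagg K D t"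
    and "\<And>k t. t \<in> T \<Longrightarrow> k \<in> {1..K} \<Longrightarrow> p \<le> V k t"
    and "feasible_NoIns M T Theta K D p cr \<xi> r"
  shows "feasible_Ins M T Theta K D V p cr \<xi> r (fair_premium M Theta K D V p r)"
  using assms(3) unfolding feasible_Ins_def feasible_NoIns_def
proof (intro conjI ballI; clarify?)
  show "\<xi> \<le> fIns M T Theta K D V p cr r (fair_premium M Theta K D V p r)"
    using assms(3) by (simp add: feasible_NoIns_def fIns_eq fNo_eq)
  fix t k assume "t \<in> T" "k \<in> {1..K}"
  then show "0 \<le> fair_premium M Theta K D V p r k t"
    unfolding fair_premium_def using assms(1,2) by (intro mult_nonneg_nonneg unserved_nonneg) simp_all
qed (simp_all add: fair_premium_def left_diff_distrib)

lemma supp_nonneg: "0 \<le> Dagg K D t \<Longrightarrow> 0 \<le> r \<Longrightarrow> 0 \<le> th \<Longrightarrow> 0 \<le> supp K D r t th"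
  by (simp add: supp_def)

lemma supp_mono: "0 \<le> th \<Longrightarrow> r \<le> r' \<Longrightarrow> supp K D r t th \<le> supp K D r' t th"
  unfolding supp_def by (intro min.mono order.refl mult_right_mono)

context finite_measure
begin

lemma integrable_supp:
  assumes "X \<in> borel_measurable M" and "AE \<omega> in M. 0 \<le> X \<omega>"
    and "0 \<le> Dagg K D t" and "0 \<le> r"
  shows "integrable M (\<lambda>\<omega>. supp K D r t (X \<omega>))"
proof (rule integrable_const_bound)
  show "AE \<omega> in M. norm (supp K D r t (X \<omega>)) \<le> Dagg K D t"
    using assms(2) by eventually_elim (use assms(3,4) supp_nonneg in \<open>auto simp: supp_def\<close>)
  show "(\<lambda>\<omega>. supp K D r t (X \<omega>)) \<in> borel_measurable M"
    unfolding supp_def using assms(1) by measurable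
qed

lemma integral_supp_mono:
  assumes "X \<in> borel_measurable M" and "AE \<omega> in M. 0 \<le> X \<omega>"
    and "0 \<le> Dagg K D t" and "0 \<le> r" and "r \<le> r'"
  shows "(\<integral>\<omega>. supp K D r t (X \<omega>) \<partial>M) \<le> (\<integral>\<omega>. supp K D r' t (X \<omega>) \<partial>M)"
  using assms
  by (intro integral_mono_AE integrable_supp) (auto elim!: eventually_mono intro: supp_mono)

lemma expected_revenue_mono:
  assumes "\<And>t. t \<in> T \<Longrightarrow> Theta t \<in> borel_measurable M"
    and "\<And>t. t \<in> T \<Longrightarrow> AE \<omega> in M. 0 \<le> Theta t \<omega>"
    and "\<And>t. t \<in> T \<Longrightarrow> 0 \<le> Dagg K D t"
    and "0 \<le> p"
  shows "mono_on {0..} (expected_revenue M T Theta K D p)"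
  unfolding expected_revenue_def
  by (intro mono_onI sum_mono mult_left_mono integral_supp_mono) (simp_all add: assms)

end

lemma expected_revenue_nonpos:
  assumes "\<And>t. t \<in> T \<Longrightarrow> AE \<omega> in M. 0 \<le> Theta t \<omega>"
    and "\<And>t. t \<in> T \<Longrightarrow> 0 \<le> Dagg K D t"
    and "p \<le> 0" and "0 \<le> r"
  shows "expected_revenue M T Theta K D p r \<le> 0"
  unfolding expected_revenue_def
proof (intro sum_nonpos mult_nonpos_nonneg integral_nonneg_AE)
  fix t assume "t \<in> T"
  from assms(1)[OF this] show "AE \<omega> in M. 0 \<le> supp K D r t (Theta t \<omega>)"
    by eventually_elim (rule supp_nonneg[OF assms(2)[OF \<open>t \<in> T\<close>] assms(4)])
qed (use assms(3) in simp)

lemma le_mult_of_greatest_feasible: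
  fixes g :: "real \<Rightarrow> real"
  assumes "0 < c" and "mono_on {0..} g"
    and greatest: "\<And>r'. 0 \<le> r' \<Longrightarrow> \<xi> \<le> g r' - c * r' \<Longrightarrow> r' \<le> r\<^sub>m\<^sub>a\<^sub>x"
    and "0 \<le> r" and "\<xi> \<le> g r - c * r"
  shows "g r - \<xi> \<le> c * r\<^sub>m\<^sub>a\<^sub>x"
proof (rule ccontr)
  assume "\<not> g r - \<xi> \<le> c * r\<^sub>m\<^sub>a\<^sub>x"
  define r' where "r' = (g r - \<xi>) / c"
  have "r\<^sub>m\<^sub>a\<^sub>x < r'" and "r \<le> r'"
    using \<open>\<not> g r - \<xi> \<le> c * r\<^sub>m\<^sub>a\<^sub>x\<close> assms(1,5) by (simp_all add: r'_def field_simps)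
  moreover have "g r \<le> g r'"
    using assms(2,4) \<open>r \<le> r'\<close> by (auto intro: mono_onD)
  then have "\<xi> \<le> g r' - c * r'"
    using assms(1) by (simp add: r'_def)
  ultimately show False
    using greatest[of r'] assms(4) by linarith
qed

lemma expected_revenue_le_capacity_cost:
  assumes "prob_space M"
    and "\<And>t. t \<in> T \<Longrightarrow> Theta t \<in> borel_measurable M"
    and "\<And>t. t \<in> T \<Longrightarrow> AE \<omega> in M. 0 \<le> Theta t \<omega>"
    and "\<And>t. t \<in> T \<Longrightarrow> 0 \<le> Dagg K D t"
    and "0 < cr" and "0 \<le> \<xi>"
    and "optimal_NoIns M T Theta K D p cr \<xi> rd"
    and "feasible_NoIns M T Theta K D p cr \<xi> r"
  shows "expected_revenue M T Theta K D p r - \<xi> \<le> cr * rd"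
proof (cases "p \<le> 0")
  case True
  have "expected_revenue M T Theta K D p r \<le> 0"
    using assms(3,4,8) True by (intro expected_revenue_nonpos) (auto simp: feasible_NoIns_def)
  moreover have "0 \<le> cr * rd"
    using assms(5,7) by (simp add: optimal_NoIns_def feasible_NoIns_def)
  ultimately show ?thesis
    using assms(6) by linarith
next
  case False
  interpret prob_space M by fact
  show ?thesis
    using assms False
    by (intro le_mult_of_greatest_feasible expected_revenue_mono)
      (auto simp: optimal_NoIns_def feasible_NoIns_def fNo_eq)
qed

theorem proposition2:
  fixes M :: "'a measure" and T :: "'t set" and Theta :: "'t \<Rightarrow> 'a \<Rightarrow> real"
    and K :: nat and D V :: "nat \<Rightarrow> 't \<Rightarrow> real" and p cr \<xi> rs rd :: real
    and \<pi>s :: "nat \<Rightarrow> 't \<Rightarrow> real"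
  assumes "prob_space M"
    and "finite T"
    and "K \<ge> 1"
    and "\<And>t. t \<in> T \<Longrightarrow> Theta t \<in> borel_measurable M"
    and "\<And>t. t \<in> T \<Longrightarrow> AE \<omega> in M. 0 \<le> Theta t \<omega> \<and> Theta t \<omega> \<le> 1"
    and "\<And>k t. t \<in> T \<Longrightarrow> k \<in> {1..K} \<Longrightarrow> D k t \<ge> 0"
    and "\<And>t. t \<in> T \<Longrightarrow> Dagg K D t > 0"
    and "\<And>k m t. t \<in> T \<Longrightarrow> 1 \<le> k \<Longrightarrow> k \<le> m \<Longrightarrow> m \<le> K \<Longrightarrow> V k t \<le> V m t"
    and "\<And>t. t \<in> T \<Longrightarrow> p \<le> V 1 t"
    and "cr > 0"
    and "\<xi> \<ge> 0"
    and "optimal_Ins M T Theta K D V p cr \<xi> rs \<pi>s"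
    and "optimal_NoIns M T Theta K D p cr \<xi> rd"
  shows "CSO M T Theta K D V p cr rs \<le> CSO M T Theta K D V p cr rd"
proof -
  have Theta_nonneg: "AE \<omega> in M. 0 \<le> Theta t \<omega>" if "t \<in> T" for t
    using assms(5)[OF that] by (auto elim: eventually_mono)
  have p_le_V: "p \<le> V k t" if "t \<in> T" "k \<in> {1..K}" for k t
    using assms(8)[of t 1 k] assms(9)[of t] that by force
  have Dagg_nonneg: "0 \<le> Dagg K D t" if "t \<in> T" for t
    using assms(7)[OF that] by simp
  have rs_Ins: "feasible_Ins M T Theta K D V p cr \<xi> rs \<pi>s"
    using assms(12) by (simp add: optimal_Ins_def)
  have rd_Ins: "feasible_Ins M T Theta K D V p cr \<xi> rd (fair_premium M Theta K D V p rd)"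
    using assms(13) Dagg_nonneg p_le_V
    by (intro feasible_Ins_fair_premium) (auto simp: optimal_NoIns_def)
  have premiums: "insObj T K D \<pi>s \<le> insObj T K D (fair_premium M Theta K D V p rd)"
    using assms(12) rd_Ins by (simp add: optimal_Ins_def)
  have "feasible_NoIns M T Theta K D p cr \<xi> rs"
    using assms(6) rs_Ins by (rule feasible_Ins_imp_feasible_NoIns)
  then have revenue: "expected_revenue M T Theta K D p rs - \<xi> \<le> cr * rd"
    using assms(1,4,10,11,13) Theta_nonneg Dagg_nonneg
    by (intro expected_revenue_le_capacity_cost)
  from rs_Ins have "\<xi> \<le> fIns M T Theta K D V p cr rs \<pi>s"
    by (simp add: feasible_Ins_def)
  with premiums revenue show ?thesis
    unfolding fIns_eq CSO_eq by linarith
qed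

end
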